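(* Let $H$ be an SR-monoid. Then: (a) $1s\Rightarrow 0s$, $2s\Rightarrow 0s$, $3s\Rightarrow 0s$, $2s\Rightarrow 1s$, $2s\Rightarrow 3s$, $2s\Rightarrow 5s$, $3s\Rightarrow 6s$, $5s\Rightarrow 4s$, $4s\Rightarrow 4's$, $5s\Rightarrow 5's$; (b) $kr\Leftrightarrow ks$ for each $k\in\{0,1,2,3,4,4',5,5',6\}$.
   Context: A monoid means a commutative cancellative monoid (written multiplicatively); $H^{\ast}$ is its unit group, $\mathbb{N}=\{1,2,\dots\}$, $\mathbb{N}_0=\{0,1,2,\dots\}$. Elements are relatively prime ($a\perp b$) if all their common divisors are units. $\mathrm{Sqf}\,H$: elements not of the form $b^2c$ with $b\notin H^{\ast}$. $\mathrm{Gpr}\,H$: elements $r$ such that $r\mid b^n$ ($n\in\mathbb{N}$) implies $r\mid b$. $H$ is an SR-monoid if $\mathrm{Gpr}\,H=\mathrm{Sqf}\,H$. Let $S$ stand for $\mathrm{Sqf}\,H$ (suffix s) or $\mathrm{Gpr}\,H$ (suffix r). For every $a\in H$: (0) there are $n\in\mathbb{N}$, $s_1,\dots,s_n\in S$ with $a=s_1\cdots s_n$; (1) there are $n\in\mathbb{N}$, $s_1,\dots,s_n\in S$ with $s_i\perp s_j$ for $i\ne j$ and $a=s_1s_2^2\cdots s_n^n$; (2) there are $n\in\mathbb{N}$, $s_1,\dots,s_n\in S$ with $s_i\mid s_{i+1}$ ($i<n$) and $a=s_1\cdots s_n$; (3) there are $n\in\mathbb{N}_0$, $s_0,\dots,s_n\in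 S$ with $a=s_0s_1^2s_2^{2^2}\cdots s_n^{2^n}$; (4) there are $b\in H$, $c\in S$ with $b\perp c$, $a=bc$, and some $d\in S$ with $d^2\mid b$ and $b\mid d^n$ for some $n\in\mathbb{N}$; (4') there are $b\in H$, $c\in S$ with $b\perp c$, $a=bc$, and for every $d\in S$, $d\mid b$ implies $d^2\mid b$; (5) there are $b\in H$, $c\in S$ with $a=bc$ and $a\mid c^n$ for some $n\in\mathbb{N}$; (5') there are $b\in H$, $c\in S$ with $a=bc$ and for every $d\in S$, $d\mid a$ implies $d\mid c$; (6) there are $b\in H$, $c\in S$ with $a=b^2c$. Condition $ks$ (resp. $kr$) is $(k)$ with $S=\mathrm{Sqf}\,H$ (resp. $S=\mathrm{Gpr}\,H$). *)

theory Defs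
  imports Main
begin

text \<open>A monoid is modelled as a type of class comm_monoid_mult (written multiplicatively);
cancellativity is assumed explicitly in the theorem. Units are the divisors of 1.\<close>

definition cancellative :: "'a::comm_monoid_mult itself \<Rightarrow> bool" where
  "cancellative _ \<longleftrightarrow> (\<forall>a b c :: 'a. a * b = a * c \<longrightarrow> b = c)"

definition relprime :: "'a::comm_monoid_mult \<Rightarrow> 'a \<Rightarrow> bool" where
  "relprime a b \<longleftrightarrow> (\<forall>c. c dvd a \<longrightarrow> c dvd b \<longrightarrow> c dvd 1)"

definition Sqf :: "'a::comm_monoid_mult set" where
  "Sqf = {a. \<not> (\<exists>b c. a = b^2 * c \<and> \<not> b dvd 1)}"

definition Gpr :: "'a::comm_monoid_mult set" where
  "Gpr = {r. \<forall>b (n::nat). n \<ge> 1 \<longrightarrow> r dvd b ^ n \<longrightarrow> r dvd b}"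

definition SR_monoid :: "'a::comm_monoid_mult itself \<Rightarrow> bool" where
  "SR_monoid _ \<longleftrightarrow> (Gpr :: 'a set) = Sqf"

definition cond0 :: "'a::comm_monoid_mult set \<Rightarrow> bool" where
  "cond0 S \<longleftrightarrow> (\<forall>a. \<exists>(n::nat) s. n \<ge> 1 \<and> (\<forall>i\<in>{1..n}. s i \<in> S) \<and> a = (\<Prod>i=1..n. s i))"

definition cond1 :: "'a::comm_monoid_mult set \<Rightarrow> bool" where
  "cond1 S \<longleftrightarrow> (\<forall>a. \<exists>(n::nat) s. n \<ge> 1 \<and> (\<forall>i\<in>{1..n}. s i \<in> S)
     \<and> (\<forall>i\<in>{1..n}. \<forall>j\<in>{1..n}. i \<noteq> j \<longrightarrow> relprime (s i) (s j))
     \<and> a = (\<Prod>i=1..n. s i ^ i))"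

definition cond2 :: "'a::comm_monoid_mult set \<Rightarrow> bool" where
  "cond2 S \<longleftrightarrow> (\<forall>a. \<exists>(n::nat) s. n \<ge> 1 \<and> (\<forall>i\<in>{1..n}. s i \<in> S)
     \<and> (\<forall>i. 1 \<le> i \<and> i < n \<longrightarrow> s i dvd s (i + 1))
     \<and> a = (\<Prod>i=1..n. s i))"

definition cond3 :: "'a::comm_monoid_mult set \<Rightarrow> bool" where
  "cond3 S \<longleftrightarrow> (\<forall>a. \<exists>(n::nat) s. (\<forall>i\<in>{0..n}. s i \<in> S) \<and> a = (\<Prod>i=0..n. s i ^ (2 ^ i)))"

definition cond4 :: "'a::comm_monoid_mult set \<Rightarrow> bool" where
  "cond4 S \<longleftrightarrow> (\<forall>a. \<exists>b c. c \<in> S \<and> relprime b c \<and> a = b * c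
     \<and> (\<exists>d\<in>S. d^2 dvd b \<and> (\<exists>n::nat. n \<ge> 1 \<and> b dvd d ^ n)))"

definition cond4' :: "'a::comm_monoid_mult set \<Rightarrow> bool" where
  "cond4' S \<longleftrightarrow> (\<forall>a. \<exists>b c. c \<in> S \<and> relprime b c \<and> a = b * c
     \<and> (\<forall>d\<in>S. d dvd b \<longrightarrow> d^2 dvd b))"

definition cond5 :: "'a::comm_monoid_mult set \<Rightarrow> bool" where
  "cond5 S \<longleftrightarrow> (\<forall>a. \<exists>b c. c \<in> S \<and> a = b * c \<and> (\<exists>n::nat. n \<ge> 1 \<and> a dvd c ^ n))"

definition cond5' :: "'a::comm_monoid_mult set \<Rightarrow> bool" where
  "cond5' S \<longleftrightarrow> (\<forall>a. \<exists>b c. c \<in> S \<and> a = b * c \<and> (\<forall>d\<in>S. d dvd a \<longrightarrow> d dvd c))"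

definition cond6 :: "'a::comm_monoid_mult set \<Rightarrow> bool" where
  "cond6 S \<longleftrightarrow> (\<forall>a. \<exists>b c. c \<in> S \<and> a = b^2 * c)"

end

theory Submission
  imports Defs
begin

text \<open>In an SR-monoid \<open>Gpr = Sqf\<close>, so (b) is a rewrite, and (a) uses the hypothesis only
through the fact that a squarefree divisor of a power \<open>b ^ n\<close> divides \<open>b\<close> (for \<open>5 \<Rightarrow> 4\<close>,
\<open>4 \<Rightarrow> 4'\<close>, \<open>5 \<Rightarrow> 5'\<close>). The central construction is for (2): a divisor chain
\<open>s\<^sub>1 | \<dots> | s\<^sub>n\<close> telescopes to \<open>s\<^sub>1 \<cdots> s\<^sub>n = t\<^sub>1 t\<^sub>2\<^sup>2 \<cdots> t\<^sub>n\<^sup>n\<close> with \<open>t\<^sub>1 \<cdots> t\<^sub>n = s\<^sub>n\<close> squarefree.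
Divisors of a squarefree element are squarefree and complementary ones are relatively prime, which
gives (1); \<open>c = s\<^sub>n\<close> gives (5); grouping the \<open>t\<^sub>i\<close> by the binary digits of \<open>i\<close> gives (3).\<close>

lemma Sqf_dvd_closed:
  assumes "x \<in> Sqf" and "y dvd x"
  shows "y \<in> Sqf"
proof -
  from \<open>y dvd x\<close> obtain k where k: "x = y * k" by (elim dvdE)
  show ?thesis unfolding Sqf_def
  proof clarify
    fix b c assume "y = b\<^sup>2 * c" "\<not> b dvd 1"
    with k have "x = b\<^sup>2 * (c * k)" by (simp add: mult.assoc)
    with \<open>x \<in> Sqf\<close> \<open>\<not> b dvd 1\<close> show False unfolding Sqf_def by blast
  qed
qed

lemma one_in_Sqf: "1 \<in> Sqf"
  unfolding Sqf_def
proof clarify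
  fix b c :: 'a assume "1 = b\<^sup>2 * c" "\<not> b dvd 1"
  then show False by (metis dvdI mult.assoc power2_eq_square)
qed

lemma Sqf_square_dvd_imp_unit: "x \<in> Sqf \<Longrightarrow> c\<^sup>2 dvd x \<Longrightarrow> c dvd 1"
  unfolding Sqf_def dvd_def by auto

lemma Sqf_mult_imp_relprime: "x * y \<in> Sqf \<Longrightarrow> relprime x y"
  unfolding relprime_def
  by (metis Sqf_square_dvd_imp_unit mult_dvd_mono power2_eq_square)

lemma Gpr_dvd_power_imp_dvd: "r \<in> Gpr \<Longrightarrow> r dvd b ^ n \<Longrightarrow> n \<ge> 1 \<Longrightarrow> r dvd b"
  unfolding Gpr_def by blast

lemma prod_power_distrib': "prod f A ^ n = (\<Prod>x\<in>A. f x ^ n)"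
  for f :: "'b \<Rightarrow> 'a::comm_monoid_mult"
  by (induct A rule: infinite_finite_induct) (auto simp add: power_mult_distrib)

definition products :: "'a::comm_monoid_mult set \<Rightarrow> 'a set" where
  "products S = prod_list ` lists S"

lemma one_in_products: "1 \<in> products S"
  unfolding products_def by (rule image_eqI[of _ _ "[]"]) simp_all

lemma products_mult: "x \<in> products S \<Longrightarrow> y \<in> products S \<Longrightarrow> x * y \<in> products S"
  unfolding products_def by (auto intro!: image_eqI[of _ _ "_ @ _"])

lemma power_in_products: "s \<in> S \<Longrightarrow> s ^ k \<in> products S"
  unfolding products_def by (rule image_eqI[of _ _ "replicate k s"]) auto

lemma prod_in_products: "(\<And>i. i \<in> A \<Longrightarrow> f i \<in> products S) \<Longrightarrow> prod f A \<in> products S"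
  by (induct A rule: infinite_finite_induct) (auto simp: one_in_products products_mult)

lemma prod_list_eq_prod_nth: "prod_list xs = (\<Prod>i<length xs. xs ! i)"
  by (induct xs) (simp_all add: prod.lessThan_Suc_shift del: prod.lessThan_Suc)

lemma cond0_if_all_products:
  assumes "1 \<in> S" and "\<And>a. a \<in> products S"
  shows "cond0 S"
  unfolding cond0_def
proof
  fix a :: 'a
  from assms(2) obtain ys where ys: "ys \<in> lists S" "a = prod_list ys"
    unfolding products_def by blast
  define xs where "xs = (if ys = [] then [1] else ys)"
  have xs: "xs \<in> lists S" "xs \<noteq> []" "a = prod_list xs"
    using ys \<open>1 \<in> S\<close> by (auto simp: xs_def)
  have "a = (\<Prod>i=1..length xs. xs ! (i - 1))"
    by (simp add: xs(3) prod_list_eq_prod_nth prod.atLeast1_atMost_eq)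
  moreover have "xs ! (i - 1) \<in> S" if "i \<in> {1..length xs}" for i
    using that xs(1) nth_mem[of "i - 1" xs] by (auto simp: in_lists_conv_set)
  moreover have "length xs \<ge> 1"
    using xs(2) by (simp add: Suc_le_eq)
  ultimately show "\<exists>(n::nat) s. n \<ge> 1 \<and> (\<forall>i\<in>{1..n}. s i \<in> S) \<and> a = (\<Prod>i=1..n. s i)"
    by (intro exI[of _ "length xs"] exI[of _ "\<lambda>i. xs ! (i - 1)"] conjI ballI)
qed

lemma cond1_imp_cond0:
  assumes "1 \<in> S" and "cond1 S"
  shows "cond0 S"
proof (rule cond0_if_all_products[OF \<open>1 \<in> S\<close>])
  fix a :: 'a
  from \<open>cond1 S\<close> obtain n :: nat and s where s: "\<forall>i\<in>{1..n}. s i \<in> S" and a: "a = (\<Prod>i=1..n. s i ^ i)"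
    unfolding cond1_def by blast
  have "s i ^ i \<in> products S" if "i \<in> {1..n}" for i
    using that s by (blast intro: power_in_products)
  then show "a \<in> products S" unfolding a by (rule prod_in_products)
qed

lemma cond2_imp_cond0: "cond2 S \<Longrightarrow> cond0 S"
  unfolding cond2_def cond0_def by blast

lemma cond3_imp_cond0:
  assumes "1 \<in> S" and "cond3 S"
  shows "cond0 S"
proof (rule cond0_if_all_products[OF \<open>1 \<in> S\<close>])
  fix a :: 'a
  from \<open>cond3 S\<close> obtain n :: nat and s where s: "\<forall>i\<in>{0..n}. s i \<in> S" and a: "a = (\<Prod>i=0..n. s i ^ 2 ^ i)"
    unfolding cond3_def by blast
  have "s i ^ 2 ^ i \<in> products S" if "i \<in> {0..n}" for i
    using that s by (blast intro: power_in_products)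
  then show "a \<in> products S" unfolding a by (rule prod_in_products)
qed

lemma divisor_chain_prod_eq_prod_powers:
  fixes s :: "nat \<Rightarrow> 'a::comm_monoid_mult"
  assumes "n \<ge> 1" and "\<forall>i. 1 \<le> i \<and> i < n \<longrightarrow> s i dvd s (i + 1)"
  shows "\<exists>t. prod t {1..n} = s n \<and> prod s {1..n} = (\<Prod>i=1..n. t i ^ i)"
  using assms
proof (induction n rule: nat_induct_at_least)
  case base
  then show ?case by (intro exI[of _ s]) simp
next
  case (Suc n)
  then obtain t where t: "prod t {1..n} = s n" "prod s {1..n} = (\<Prod>i=1..n. t i ^ i)" by auto
  have "s n dvd s (Suc n)" using Suc by auto
  then obtain v where v: "s (Suc n) = s n * v" by (elim dvdE)
  \<comment> \<open>the new quotient \<open>v\<close> enters with exponent 1 and every old \<open>t i\<close> moves up one exponent\<close>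
  define t' where "t' i = (if i = 1 then v else t (i - 1))" for i
  have shift: "prod f {1..Suc n} = f 1 * prod (\<lambda>i. f (Suc i)) {1..n}" for f :: "nat \<Rightarrow> 'a"
    by (simp add: prod.atLeast_Suc_atMost prod.shift_bounds_cl_Suc_ivl del: prod.cl_ivl_Suc)
  have t'_prod: "prod t' {1..Suc n} = v * prod t {1..n}"
    unfolding shift by (simp add: t'_def)
  have "(\<Prod>i=1..Suc n. t' i ^ i) = v * (\<Prod>i=1..n. t i ^ Suc i)"
    unfolding shift[of "\<lambda>i. t' i ^ i"] by (simp add: t'_def)
  also have "(\<Prod>i=1..n. t i ^ Suc i) = (\<Prod>i=1..n. t i ^ i) * prod t {1..n}"
    by (simp add: prod.distrib[symmetric] mult.commute)
  finally have t'_powers: "(\<Prod>i=1..Suc n. t' i ^ i) = v * prod s {1..n} * s n"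
    using t by (simp add: mult_ac)
  have "prod s {1..Suc n} = prod s {1..n} * s (Suc n)" using Suc by simp
  then show ?case using t'_prod t'_powers t v by (intro exI[of _ t']) (simp add: mult_ac)
qed

lemma cond2_imp_prod_powers:
  fixes a :: "'a::comm_monoid_mult"
  assumes "cond2 S"
  obtains n :: nat and t where "n \<ge> 1" "prod t {1..n} \<in> S" "a = (\<Prod>i=1..n. t i ^ i)"
proof -
  from assms[unfolded cond2_def, THEN spec[of _ a]] obtain n :: nat and s where s: "n \<ge> 1" "\<forall>i\<in>{1..n}. s i \<in> S"
    "\<forall>i. 1 \<le> i \<and> i < n \<longrightarrow> s i dvd s (i + 1)" "a = (\<Prod>i=1..n. s i)"
    by blast
  from divisor_chain_prod_eq_prod_powers[OF s(1) s(3)] obtain t where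
    "prod t {1..n} = s n" "prod s {1..n} = (\<Prod>i=1..n. t i ^ i)" by blast
  with s show thesis by (intro that[of n t]) auto
qed

lemma cond2_imp_cond1:
  assumes "cond2 (Sqf :: 'a::comm_monoid_mult set)"
  shows "cond1 (Sqf :: 'a set)"
  unfolding cond1_def
proof
  fix a :: 'a
  obtain n :: nat and t where n: "n \<ge> 1" and sqf: "prod t {1..n} \<in> Sqf" and a: "a = (\<Prod>i=1..n. t i ^ i)"
    using cond2_imp_prod_powers[OF assms, where a = a] by blast
  have "t i \<in> Sqf" if "i \<in> {1..n}" for i
  proof -
    have "t i dvd prod t {1..n}"
      using that prod_dvd_prod_subset[of "{1..n}" "{i}" t] by simp
    with sqf show ?thesis by (rule Sqf_dvd_closed)
  qed
  moreover have "relprime (t i) (t j)" if "i \<in> {1..n}" "j \<in> {1..n}" "i \<noteq> j" for i j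
  proof -
    have "t i * t j dvd prod t {1..n}"
      using that prod_dvd_prod_subset[of "{1..n}" "{i, j}" t] by simp
    with sqf have "t i * t j \<in> Sqf" by (rule Sqf_dvd_closed)
    then show ?thesis by (rule Sqf_mult_imp_relprime)
  qed
  ultimately show "\<exists>n s. n \<ge> 1 \<and> (\<forall>i\<in>{1..n}. s i \<in> Sqf)
      \<and> (\<forall>i\<in>{1..n}. \<forall>j\<in>{1..n}. i \<noteq> j \<longrightarrow> relprime (s i) (s j)) \<and> a = (\<Prod>i=1..n. s i ^ i)"
    using n a by (intro exI[of _ n] exI[of _ t]) simp
qed

lemma binary_digits_sum_eq: "(i::nat) < 2 ^ N \<Longrightarrow> (\<Sum>k<N. of_bool (bit i k) * 2 ^ k) = i"
  using take_bit_sum[of N i] take_bit_nat_eq_self[of i N]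
  by (simp add: push_bit_eq_mult atLeast0LessThan mult.commute)

lemma prod_power_binary_digits:
  fixes f :: "nat \<Rightarrow> 'a::comm_monoid_mult"
  assumes "\<And>i. i \<in> A \<Longrightarrow> i < 2 ^ N"
  shows "(\<Prod>k<N. (\<Prod>i\<in>A. f i ^ of_bool (bit i k)) ^ 2 ^ k) = (\<Prod>i\<in>A. f i ^ i)"
proof -
  have "(\<Prod>k<N. (\<Prod>i\<in>A. f i ^ of_bool (bit i k)) ^ 2 ^ k)
      = (\<Prod>k<N. \<Prod>i\<in>A. f i ^ (of_bool (bit i k) * 2 ^ k))"
    by (simp add: prod_power_distrib' power_mult)
  also have "\<dots> = (\<Prod>i\<in>A. \<Prod>k<N. f i ^ (of_bool (bit i k) * 2 ^ k))"
    by (rule prod.swap)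
  also have "\<dots> = (\<Prod>i\<in>A. f i ^ (\<Sum>k<N. of_bool (bit i k) * 2 ^ k))"
    by (simp only: power_sum)
  also have "\<dots> = (\<Prod>i\<in>A. f i ^ i)"
    by (rule prod.cong[OF refl]) (simp only: binary_digits_sum_eq assms)
  finally show ?thesis .
qed

lemma cond2_imp_cond3:
  assumes "cond2 (Sqf :: 'a::comm_monoid_mult set)"
  shows "cond3 (Sqf :: 'a set)"
  unfolding cond3_def
proof
  fix a :: 'a
  obtain n :: nat and t where sqf: "prod t {1..n} \<in> Sqf" and a: "a = (\<Prod>i=1..n. t i ^ i)"
    using cond2_imp_prod_powers[OF assms, where a = a] by blast
  define r where "r k = (\<Prod>i=1..n. t i ^ of_bool (bit i k))" for k
  have "r k \<in> Sqf" for k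
  proof -
    have "r k dvd prod t {1..n}"
      unfolding r_def by (rule prod_dvd_prod) simp
    with sqf show ?thesis by (rule Sqf_dvd_closed)
  qed
  moreover have "(\<Prod>k=0..n. r k ^ 2 ^ k) = a"
  proof -
    have "(\<Prod>k=0..n. r k ^ 2 ^ k) = (\<Prod>k<Suc n. r k ^ 2 ^ k)"
      by (simp add: atLeast0AtMost lessThan_Suc_atMost)
    also have "\<dots> = a"
      unfolding r_def a
    proof (rule prod_power_binary_digits)
      fix i assume "i \<in> {1..n}"
      then show "i < 2 ^ Suc n" using less_exp[of "Suc n"] by simp
    qed
    finally show ?thesis .
  qed
  ultimately show "\<exists>n s. (\<forall>i\<in>{0..n}. s i \<in> Sqf) \<and> a = (\<Prod>i=0..n. s i ^ 2 ^ i)"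
    by (intro exI[of _ n] exI[of _ r]) simp
qed

lemma cond2_imp_cond5:
  assumes "cond2 S"
  shows "cond5 S"
  unfolding cond5_def
proof
  fix a :: 'a
  obtain n :: nat and t where n: "n \<ge> 1" and S: "prod t {1..n} \<in> S" and a: "a = (\<Prod>i=1..n. t i ^ i)"
    using cond2_imp_prod_powers[OF assms, where a = a] by blast
  have "a = (\<Prod>i=1..n. t i ^ (i - 1)) * prod t {1..n}"
    unfolding a prod.distrib[symmetric]
    by (rule prod.cong[OF refl]) (auto simp: power_Suc2[symmetric])
  moreover have "a dvd prod t {1..n} ^ n"
    unfolding a prod_power_distrib'
  proof (rule prod_dvd_prod)
    fix i assume "i \<in> {1..n}"
    then have "t i ^ n = t i ^ i * t i ^ (n - i)" by (simp flip: power_add)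
    then show "t i ^ i dvd t i ^ n" by simp
  qed
  ultimately show "\<exists>b c. c \<in> S \<and> a = b * c \<and> (\<exists>n::nat. n \<ge> 1 \<and> a dvd c ^ n)"
    using n S by blast
qed

lemma cond3_imp_cond6:
  assumes "cond3 S"
  shows "cond6 S"
  unfolding cond6_def
proof
  fix a :: 'a
  from assms obtain n :: nat and s where s: "\<forall>i\<in>{0..n}. s i \<in> S" and a: "a = (\<Prod>i=0..n. s i ^ 2 ^ i)"
    unfolding cond3_def by blast
  have "a = (\<Prod>i<n. s (Suc i) ^ 2 ^ i)\<^sup>2 * s 0"
    unfolding a atLeast0AtMost prod.atMost_shift
    by (simp add: prod_power_distrib' power_mult[symmetric] mult.commute del: prod.lessThan_Suc)
  moreover have "s 0 \<in> S" using s by simp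
  ultimately show "\<exists>b c. c \<in> S \<and> a = b\<^sup>2 * c" by blast
qed

lemma cond5_imp_cond4:
  assumes "(Sqf :: 'a::comm_monoid_mult set) \<subseteq> Gpr" and "cond5 (Sqf :: 'a set)"
  shows "cond4 (Sqf :: 'a set)"
  unfolding cond4_def
proof
  fix a :: 'a
  from \<open>cond5 Sqf\<close> obtain b c and n :: nat where c: "c \<in> Sqf" and a: "a = b * c"
    and n: "n \<ge> 1" "a dvd c ^ n"
    unfolding cond5_def by meson
  from \<open>cond5 Sqf\<close> obtain b' d and m :: nat where d: "d \<in> Sqf" "b = b' * d" "b dvd d ^ m"
    unfolding cond5_def by meson
  have "d dvd b" using d(2) by simp
  also have "b dvd a" using a by simp
  also have "a dvd c ^ n" by (fact n(2))
  finally have "d dvd c ^ n" .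
  with d(1) assms(1) n(1) have "d dvd c" by (blast intro: Gpr_dvd_power_imp_dvd)
  \<comment> \<open>split \<open>a = (b d) e\<close> with \<open>c = d e\<close>: a common divisor of \<open>b d\<close> and \<open>e\<close> divides a power of \<open>d\<close>,
    hence \<open>d\<close>, so its square divides \<open>d e = c\<close>\<close>
  then obtain e where e: "c = d * e" by (elim dvdE)
  from c have "e \<in> Sqf" by (rule Sqf_dvd_closed) (simp add: e)
  have bd_dvd: "b * d dvd d ^ Suc m"
    using mult_dvd_mono[OF d(3) dvd_refl[of d]] by (simp only: power_Suc2)
  have "d\<^sup>2 dvd b * d"
    using mult_dvd_mono[OF \<open>d dvd b\<close> dvd_refl[of d]] by (simp add: power2_eq_square)
  moreover have "relprime (b * d) e"
    unfolding relprime_def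
  proof (intro allI impI)
    fix x assume x: "x dvd b * d" "x dvd e"
    have "x \<in> Gpr" using Sqf_dvd_closed[OF \<open>e \<in> Sqf\<close> x(2)] assms(1) by blast
    moreover have "x dvd d ^ Suc m" using x(1) bd_dvd by (rule dvd_trans)
    ultimately have "x dvd d" by (rule Gpr_dvd_power_imp_dvd) simp
    then have "x\<^sup>2 dvd c" unfolding e power2_eq_square using x(2) by (rule mult_dvd_mono)
    with c show "x dvd 1" by (rule Sqf_square_dvd_imp_unit)
  qed
  moreover have "a = (b * d) * e" using a e by (simp add: mult_ac)
  ultimately show "\<exists>b c. c \<in> Sqf \<and> relprime b c \<and> a = b * c
      \<and> (\<exists>d\<in>Sqf. d\<^sup>2 dvd b \<and> (\<exists>n::nat. n \<ge> 1 \<and> b dvd d ^ n))"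
    using \<open>e \<in> Sqf\<close> d(1) bd_dvd by (intro exI[of _ "b * d"] exI[of _ e] conjI bexI[of _ d]) auto
qed

lemma cond4_imp_cond4':
  assumes "S \<subseteq> Gpr" and "cond4 S"
  shows "cond4' S"
  unfolding cond4'_def
proof
  fix a :: 'a
  from \<open>cond4 S\<close> obtain b c d and n :: nat where bc: "c \<in> S" "relprime b c" "a = b * c"
    and d: "d \<in> S" "d\<^sup>2 dvd b" "n \<ge> 1" "b dvd d ^ n"
    unfolding cond4_def by meson
  have "d'\<^sup>2 dvd b" if "d' \<in> S" "d' dvd b" for d'
  proof -
    have "d' \<in> Gpr" using that(1) assms(1) by blast
    moreover have "d' dvd d ^ n" using that(2) d(4) by (rule dvd_trans)
    ultimately have "d' dvd d" using d(3) by (rule Gpr_dvd_power_imp_dvd)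
    then have "d'\<^sup>2 dvd d\<^sup>2" by (simp add: power2_eq_square mult_dvd_mono)
    then show ?thesis using d(2) by (rule dvd_trans)
  qed
  with bc show "\<exists>b c. c \<in> S \<and> relprime b c \<and> a = b * c \<and> (\<forall>d\<in>S. d dvd b \<longrightarrow> d\<^sup>2 dvd b)"
    by blast
qed

lemma cond5_imp_cond5':
  assumes "S \<subseteq> Gpr" and "cond5 S"
  shows "cond5' S"
  unfolding cond5'_def
proof
  fix a :: 'a
  from \<open>cond5 S\<close> obtain b c and n :: nat where bc: "c \<in> S" "a = b * c" "n \<ge> 1" "a dvd c ^ n"
    unfolding cond5_def by blast
  have "d dvd c" if "d \<in> S" "d dvd a" for d
  proof -
    have "d \<in> Gpr" using that(1) assms(1) by blast
    moreover have "d dvd c ^ n" using that(2) bc(4) by (rule dvd_trans)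
    ultimately show "d dvd c" using bc(3) by (rule Gpr_dvd_power_imp_dvd)
  qed
  with bc show "\<exists>b c. c \<in> S \<and> a = b * c \<and> (\<forall>d\<in>S. d dvd a \<longrightarrow> d dvd c)"
    by blast
qed

theorem proposition4p2:
  assumes "cancellative TYPE('a::comm_monoid_mult)"
    and "SR_monoid TYPE('a)"
  shows "(cond1 (Sqf::'a set) \<longrightarrow> cond0 (Sqf::'a set))
    \<and> (cond2 (Sqf::'a set) \<longrightarrow> cond0 (Sqf::'a set))
    \<and> (cond3 (Sqf::'a set) \<longrightarrow> cond0 (Sqf::'a set))
    \<and> (cond2 (Sqf::'a set) \<longrightarrow> cond1 (Sqf::'a set))
    \<and> (cond2 (Sqf::'a set) \<longrightarrow> cond3 (Sqf::'a set))
    \<and> (cond2 (Sqf::'a set) \<longrightarrow> cond5 (Sqf::'a set))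
    \<and> (cond3 (Sqf::'a set) \<longrightarrow> cond6 (Sqf::'a set))
    \<and> (cond5 (Sqf::'a set) \<longrightarrow> cond4 (Sqf::'a set))
    \<and> (cond4 (Sqf::'a set) \<longrightarrow> cond4' (Sqf::'a set))
    \<and> (cond5 (Sqf::'a set) \<longrightarrow> cond5' (Sqf::'a set))
    \<and> ((cond0 (Gpr::'a set) \<longleftrightarrow> cond0 (Sqf::'a set))
      \<and> (cond1 (Gpr::'a set) \<longleftrightarrow> cond1 (Sqf::'a set))
      \<and> (cond2 (Gpr::'a set) \<longleftrightarrow> cond2 (Sqf::'a set))
      \<and> (cond3 (Gpr::'a set) \<longleftrightarrow> cond3 (Sqf::'a set))
      \<and> (cond4 (Gpr::'a set) \<longleftrightarrow> cond4 (Sqf::'a set))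
      \<and> (cond4' (Gpr::'a set) \<longleftrightarrow> cond4' (Sqf::'a set))
      \<and> (cond5 (Gpr::'a set) \<longleftrightarrow> cond5 (Sqf::'a set))
      \<and> (cond5' (Gpr::'a set) \<longleftrightarrow> cond5' (Sqf::'a set))
      \<and> (cond6 (Gpr::'a set) \<longleftrightarrow> cond6 (Sqf::'a set)))"
proof -
  have Gpr_eq_Sqf: "(Gpr :: 'a set) = Sqf"
    using assms(2) unfolding SR_monoid_def by simp
  then have Sqf_sub_Gpr: "(Sqf :: 'a set) \<subseteq> Gpr" by simp
  show ?thesis
    unfolding Gpr_eq_Sqf
    by (simp add: one_in_Sqf cond1_imp_cond0 cond2_imp_cond0 cond3_imp_cond0
      cond2_imp_cond1 cond2_imp_cond3 cond2_imp_cond5 cond3_imp_cond6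
      cond5_imp_cond4[OF Sqf_sub_Gpr] cond4_imp_cond4'[OF Sqf_sub_Gpr]
      cond5_imp_cond5'[OF Sqf_sub_Gpr])
qed

end
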